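(* Let $T_l$ be a $2m$ deck-shuffler IET. Then there is a $(2m-1)$-flower $F_l$ for $E_2$ such that $H_l([0,1))\subset F_l$.
   Context: $\mathbb{T}=\mathbb{R}/\mathbb{Z}\cong[0,1)$, $E_2(x)=2x\bmod1$. A $2m$ deck-shuffler IET $T_l$ is the map $[0,1)\to[0,1)$ determined by a length vector $l$ giving a partition of $[0,1)$ into consecutive left-closed right-open intervals $A_1<\dots<A_m<B_1<\dots<B_m$ of positive lengths, with $T_l(x)=x+|B_1|+\dots+|B_i|$ for $x\in A_i$ and $T_l(x)=x-|A_i|-\dots-|A_m|$ for $x\in B_i$. $B=B_1\cup\dots\cup B_m$ and $H_l(x)=\sum_{n=0}^\infty \chi_B(T_l^n x)/2^{n+1}$. A preimage selector for $E_2$ is a map $\eta:\mathbb{T}\to\mathbb{T}$ with $E_2(\eta(x))=x$ for all $x$, having finitely many discontinuities, each a jump discontinuity (both one-sided limits exist, differ, and one equals the value). A $p$-flower is $\overline{\eta(\mathbb{T})}$ for a preimage selector with exactly $p$ discontinuities. *)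

theory Defs
  imports "HOL-Analysis.Analysis"
begin

text \<open>The circle T = R/Z is represented by [0,1) (reals taken mod 1);
  its topology is obtained through the embedding circ t = cis (2 pi t).\<close>

definition circ :: "real \<Rightarrow> complex" where
  "circ t = cis (2 * pi * t)"

definition Aint :: "(nat \<Rightarrow> real) \<Rightarrow> nat \<Rightarrow> real set" where
  "Aint a i = {(\<Sum>j=1..<i. a j) ..< (\<Sum>j=1..i. a j)}"

definition Bint :: "nat \<Rightarrow> (nat \<Rightarrow> real) \<Rightarrow> (nat \<Rightarrow> real) \<Rightarrow> nat \<Rightarrow> real set" where
  "Bint m a b i = {(\<Sum>j=1..m. a j) + (\<Sum>j=1..<i. b j) ..< (\<Sum>j=1..m. a j) + (\<Sum>j=1..i. b j)}"

definition Bset :: "nat \<Rightarrow> (nat \<Rightarrow> real) \<Rightarrow> (nat \<Rightarrow> real) \<Rightarrow> real set" where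
  "Bset m a b = (\<Union>i\<in>{1..m}. Bint m a b i)"

definition deck_shuffler :: "nat \<Rightarrow> (nat \<Rightarrow> real) \<Rightarrow> (nat \<Rightarrow> real) \<Rightarrow> real \<Rightarrow> real" where
  "deck_shuffler m a b x =
     x + (\<Sum>i=1..m. (if x \<in> Aint a i then (\<Sum>j=1..i. b j) else 0)
                    - (if x \<in> Bint m a b i then (\<Sum>j=i..m. a j) else 0))"

definition H_map :: "nat \<Rightarrow> (nat \<Rightarrow> real) \<Rightarrow> (nat \<Rightarrow> real) \<Rightarrow> real \<Rightarrow> real" where
  "H_map m a b x = (\<Sum>n. indicator (Bset m a b) ((deck_shuffler m a b ^^ n) x) / 2 ^ (Suc n))"

text \<open>A map eta : T \<rightarrow> T given by a real function on [0,1), values read mod 1;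
  its lift to the circle is t \<mapsto> circ (eta (frac t)).\<close>

definition circle_lift :: "(real \<Rightarrow> real) \<Rightarrow> real \<Rightarrow> complex" where
  "circle_lift \<eta> t = circ (\<eta> (frac t))"

definition discont_set :: "(real \<Rightarrow> real) \<Rightarrow> real set" where
  "discont_set \<eta> = {x \<in> {0..<1}. \<not> isCont (circle_lift \<eta>) x}"

definition jump_discont :: "(real \<Rightarrow> real) \<Rightarrow> real \<Rightarrow> bool" where
  "jump_discont \<eta> x \<longleftrightarrow> (\<exists>L R. (circle_lift \<eta> \<longlongrightarrow> L) (at_left x) \<and>
      (circle_lift \<eta> \<longlongrightarrow> R) (at_right x) \<and> L \<noteq> R \<and>
      (L = circle_lift \<eta> x \<or> R = circle_lift \<eta> x))"

definition preimage_selector :: "(real \<Rightarrow> real) \<Rightarrow> bool" where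
  "preimage_selector \<eta> \<longleftrightarrow> (\<forall>x\<in>{0..<1}. frac (2 * \<eta> x) = x) \<and>
      finite (discont_set \<eta>) \<and> (\<forall>x\<in>discont_set \<eta>. jump_discont \<eta> x)"

definition flower_of :: "(real \<Rightarrow> real) \<Rightarrow> real set" where
  "flower_of \<eta> = {y \<in> {0..<1}. circ y \<in> closure (circ ` \<eta> ` {0..<1})}"

definition is_flower :: "nat \<Rightarrow> real set \<Rightarrow> bool" where
  "is_flower p F \<longleftrightarrow> (\<exists>\<eta>. preimage_selector \<eta> \<and> card (discont_set \<eta>) = p \<and> F = flower_of \<eta>)"

end

theory Submission
  imports Defs
begin

(* T translates each of its 2m pieces, and the images of B_1, A_1, ..., B_m, A_m are the
   consecutive intervals [image_cut j, image_cut (j + 1)). H x is the binary number whose digits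
   record the visits of the orbit of x to B, so H x = (\<chi>_B x + H (T x)) / 2; H is nondecreasing,
   takes values in (0,1), is below 1/2 on A and above 1/2 on B.
   Put c_j = H (image_cut j) for 0 < j < 2m, c_0 = 0 and c_2m = 1. If T x lies in the j-th image
   interval, then H (T x) \<in> [c_j, c_(j+1)] and H x = H (T x) / 2 + [j even] / 2. So H([0,1)) lies in
   the closure of the image of the selector \<eta> y = y / 2 + [j even] / 2 (for y \<in> [c_j, c_(j+1))),
   which jumps exactly at c_1, ..., c_(2m-1) provided these are strictly increasing.
   That is the heart of the matter: if H (image_cut j) = H (image_cut (j + 1)), the two points have
   the same itinerary; the interval between their orbits is then eventually translated rigidly by T,
   which forces both points to be periodic, whereas their T-preimages lie on opposite sides of
   the A/B boundary. *)

lemma strict_mono_on_atMostI: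
  fixes p :: "nat \<Rightarrow> 'a::order"
  assumes "\<And>k. k < n \<Longrightarrow> p k < p (Suc k)"
  shows "strict_mono_on {..n} p"
proof (rule strict_mono_onI)
  fix i j assume "i \<in> {..n}" "j \<in> {..n}" "i < j"
  then show "p i < p j"
  proof (induction j)
    case (Suc j)
    then have "p j < p (Suc j)" using assms by simp
    then show ?case using Suc by (cases "i = j") (auto intro: less_trans)
  qed simp
qed

lemma interval_index_exists:
  fixes p :: "nat \<Rightarrow> 'a::linorder"
  assumes "p 0 \<le> x" "x < p n"
  obtains k where "k < n" "p k \<le> x" "x < p (Suc k)"
proof -
  define j where "j = (LEAST j. x < p j)"
  have "x < p j" unfolding j_def by (rule LeastI[of _ n]) (rule assms(2))
  moreover have "j \<le> n" unfolding j_def using assms(2) by (rule Least_le)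
  moreover have "j \<noteq> 0" using assms(1) \<open>x < p j\<close> by (metis leD)
  moreover have "\<not> x < p (j - 1)" unfolding j_def by (rule not_less_Least) (use \<open>j \<noteq> 0\<close> j_def in simp)
  ultimately show ?thesis using that[of "j - 1"] by simp
qed

lemma interval_index_mono:
  fixes p :: "nat \<Rightarrow> 'a::linorder"
  assumes "strict_mono_on {..n} p" "k < n" "p k \<le> x" "x \<le> y" "y < p (Suc l)"
  shows "k \<le> l"
proof (rule ccontr)
  assume "\<not> k \<le> l"
  then have "p (Suc l) \<le> p k" using assms(1,2) by (auto intro: strict_mono_on_leD[OF assms(1)])
  then show False using assms(3-5) by simp
qed

lemma interval_index_unique:
  fixes p :: "nat \<Rightarrow> 'a::linorder"
  assumes "strict_mono_on {..n} p" "k < n" "l < n"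
    and "p k \<le> x" "x < p (Suc k)" "p l \<le> x" "x < p (Suc l)"
  shows "k = l"
  using interval_index_mono[OF assms(1,2,4) order_refl assms(7)]
    interval_index_mono[OF assms(1,3,6) order_refl assms(5)] by simp

definition psum :: "(nat \<Rightarrow> 'a::comm_monoid_add) \<Rightarrow> nat \<Rightarrow> 'a" where
  "psum f k = (\<Sum>j=1..k. f j)"

lemma psum_0 [simp]: "psum f 0 = 0"
  by (simp add: psum_def)

lemma psum_Suc [simp]: "psum f (Suc k) = psum f k + f (Suc k)"
  by (simp add: psum_def)

lemma psum_strict_mono_on:
  fixes f :: "nat \<Rightarrow> 'a::ordered_ab_group_add"
  assumes "\<And>j. j \<in> {1..n} \<Longrightarrow> 0 < f j"
  shows "strict_mono_on {..n} (psum f)"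
  by (rule strict_mono_on_atMostI) (simp add: assms)

lemma psum_diff:
  "k \<le> n \<Longrightarrow> (\<Sum>j=Suc k..n. f j) = psum f n - psum f k"
  for f :: "nat \<Rightarrow> 'a::ab_group_add"
  by (induction n rule: dec_induct) simp_all

lemma binary_series_summable:
  fixes d :: "nat \<Rightarrow> real"
  assumes "\<And>n. 0 \<le> d n" "\<And>n. d n \<le> 1"
  shows "summable (\<lambda>n. d n / 2 ^ Suc n)"
  by (rule summable_comparison_test'[OF sums_summable[OF power_half_series]])
    (simp add: assms power_one_over divide_le_cancel)

lemma binary_series_complement:
  fixes d :: "nat \<Rightarrow> real"
  assumes "\<And>n. 0 \<le> d n" "\<And>n. d n \<le> 1"
  shows "(\<Sum>n. (1 - d n) / 2 ^ Suc n) = 1 - (\<Sum>n. d n / 2 ^ Suc n)"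
proof -
  have "(\<lambda>n. (1 - d n) / 2 ^ Suc n) sums (1 - (\<Sum>n. d n / 2 ^ Suc n))"
    using sums_diff[OF power_half_series summable_sums[OF binary_series_summable[OF assms]]]
    by (simp add: power_one_over diff_divide_distrib)
  then show ?thesis by (rule sums_unique[symmetric])
qed

lemma binary_series_pos:
  fixes d :: "nat \<Rightarrow> real"
  assumes "\<And>n. 0 \<le> d n" "\<And>n. d n \<le> 1" "0 < d k"
  shows "0 < (\<Sum>n. d n / 2 ^ Suc n)"
  by (rule suminf_pos2[where i=k, OF binary_series_summable]) (use assms in auto)

lemma binary_series_less_one:
  fixes d :: "nat \<Rightarrow> real"
  assumes "\<And>n. 0 \<le> d n" "\<And>n. d n \<le> 1" "d k < 1"
  shows "(\<Sum>n. d n / 2 ^ Suc n) < 1"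
  using binary_series_pos[of "\<lambda>n. 1 - d n" k] binary_series_complement[of d] assms by simp

lemma binary_series_Suc:
  fixes d :: "nat \<Rightarrow> real"
  assumes "\<And>n. 0 \<le> d n" "\<And>n. d n \<le> 1"
  shows "(\<Sum>n. d n / 2 ^ Suc n) = d 0 / 2 + (\<Sum>n. d (Suc n) / 2 ^ Suc n) / 2"
proof -
  have "(\<Sum>n. d (Suc n) / 2 ^ Suc n) / 2 = (\<Sum>n. d (Suc n) / 2 ^ Suc (Suc n))"
    by (subst suminf_divide[OF binary_series_summable, symmetric]) (simp_all add: assms)
  also have "\<dots> = (\<Sum>n. d n / 2 ^ Suc n) - d 0 / 2"
    using suminf_split_head[OF binary_series_summable[OF assms]] by simp
  finally show ?thesis by linarith
qed

lemma bounded_incseq_eventually_small_steps: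
  fixes s :: "nat \<Rightarrow> real"
  assumes "incseq s" "\<And>n. s n \<le> B" "0 < \<delta>"
  shows "\<exists>N. \<forall>n\<ge>N. s (Suc n) < s n + \<delta>"
proof -
  obtain L where "s \<longlonglongrightarrow> L" by (rule incseq_convergent[OF assms(1), of B]) (use assms(2) in auto)
  then have "Cauchy s" by (rule LIMSEQ_imp_Cauchy)
  then obtain N where N: "\<forall>i\<ge>N. \<forall>j\<ge>N. norm (s i - s j) < \<delta>" using CauchyD assms(3) by blast
  have "s (Suc n) < s n + \<delta>" if "N \<le> n" for n
    using N[rule_format, of "Suc n" n] that by simp
  then show ?thesis by blast
qed

lemma bounded_sequence_close_terms:
  fixes s :: "nat \<Rightarrow> real"
  assumes "bounded (range s)" "0 < \<epsilon>"
  obtains i j where "i < j" "\<bar>s j - s i\<bar> < \<epsilon>"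
proof -
  obtain l r where r: "strict_mono r" "(s \<circ> r) \<longlonglongrightarrow> l"
    using bounded_imp_convergent_subsequence[OF assms(1)] by blast
  from r(2) have "Cauchy (s \<circ> r)" by (rule LIMSEQ_imp_Cauchy)
  then obtain M where M: "\<forall>i\<ge>M. \<forall>j\<ge>M. norm ((s \<circ> r) i - (s \<circ> r) j) < \<epsilon>"
    using CauchyD assms(2) by blast
  have "\<bar>s (r (Suc M)) - s (r M)\<bar> < \<epsilon>" using M[rule_format, of "Suc M" M] by simp
  moreover have "r M < r (Suc M)" using r(1) by (simp add: strict_mono_Suc_iff)
  ultimately show ?thesis by (rule that[rotated])
qed

lemma circ_add_half: "circ (x + 1 / 2) = - circ x"
  by (simp add: circ_def distrib_left cis_mult[symmetric])

(* The preimage of y under doubling chosen on the k-th sector: in [1/2,1) for even k (sectors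
   coming from B-pieces), in [0,1/2) for odd k. *)
definition branch :: "nat \<Rightarrow> real \<Rightarrow> complex" where
  "branch k t = circ (t / 2 + (if even k then 1 / 2 else 0))"

lemma continuous_on_branch: "continuous_on S (branch k)"
  unfolding branch_def circ_def by (intro continuous_intros) simp

lemma isCont_branch: "isCont (branch k) t"
  using continuous_on_branch[of UNIV k] by (simp add: continuous_on_eq_continuous_at)

lemma branch_Suc_neq: "branch (Suc k) t \<noteq> branch k t"
proof -
  have "circ (t / 2) \<noteq> 0" by (simp add: circ_def)
  then have "circ (t / 2 + 1 / 2) \<noteq> circ (t / 2)" using circ_add_half[of "t / 2"] by auto
  then show ?thesis by (cases "even k") (auto simp: branch_def)
qed

lemma isCont_if_eq_on_open:
  assumes "open S" "x \<in> S" "\<And>t. t \<in> S \<Longrightarrow> f t = g t" "isCont g x"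
  shows "isCont f x"
proof -
  have "eventually (\<lambda>t. f t = g t) (nhds x)"
    unfolding eventually_nhds using assms(1-3) by blast
  then show ?thesis using assms(4) isCont_cong by blast
qed

lemma bounded_constant_increments_zero:
  fixes x :: "nat \<Rightarrow> real"
  assumes "\<And>r. x (Suc r) - x r = t" "\<And>r. \<bar>x r\<bar> \<le> B"
  shows "t = 0"
proof (rule ccontr)
  assume "t \<noteq> 0"
  have linear: "x r = x 0 + real r * t" for r
  proof (induction r)
    case (Suc r)
    then show ?case using assms(1)[of r] by (simp add: algebra_simps)
  qed simp
  obtain r where "2 * B < real r * \<bar>t\<bar>"
    using ex_less_of_nat_mult[of "\<bar>t\<bar>" "2 * B"] \<open>t \<noteq> 0\<close> by auto
  moreover have "\<bar>real r * t\<bar> \<le> 2 * B" using linear[of r] assms(2)[of r] assms(2)[of 0] by linarith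
  ultimately show False by (simp add: abs_mult)
qed

lemma not_isCont_if_left_limit_differs:
  fixes f :: "real \<Rightarrow> 'a::t2_space"
  assumes "(f \<longlongrightarrow> l) (at_left x)" "l \<noteq> f x"
  shows "\<not> isCont f x"
proof
  assume "isCont f x"
  then have "(f \<longlongrightarrow> f x) (at_left x)" unfolding isCont_def filterlim_at_split by blast
  with assms show False using tendsto_unique[OF trivial_limit_at_left_real] by blast
qed

locale deck_shuffler_iet =
  fixes m :: nat and a b :: "nat \<Rightarrow> real"
  assumes m_pos: "1 \<le> m"
    and lengths_pos: "\<forall>i\<in>{1..m}. a i > 0 \<and> b i > 0"
    and lengths_sum: "(\<Sum>i=1..m. a i) + (\<Sum>i=1..m. b i) = 1"
begin

abbreviation T where "T \<equiv> deck_shuffler m a b"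
abbreviation H where "H \<equiv> H_map m a b"
abbreviation \<alpha> where "\<alpha> \<equiv> psum a m"

lemma psum_a_strict: "strict_mono_on {..m} (psum a)"
  using lengths_pos by (intro psum_strict_mono_on) auto

lemma psum_b_strict: "strict_mono_on {..m} (psum b)"
  using lengths_pos by (intro psum_strict_mono_on) auto

lemma psum_a_bounds: "k \<le> m \<Longrightarrow> 0 \<le> psum a k \<and> psum a k \<le> \<alpha>"
  using strict_mono_on_leD[OF psum_a_strict, of 0 k] strict_mono_on_leD[OF psum_a_strict, of k m] by simp

lemma psum_b_bounds: "k \<le> m \<Longrightarrow> 0 \<le> psum b k \<and> psum b k \<le> psum b m"
  using strict_mono_on_leD[OF psum_b_strict, of 0 k] strict_mono_on_leD[OF psum_b_strict, of k m] by simp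

lemma alpha_add_psum_b: "\<alpha> + psum b m = 1"
  using lengths_sum by (simp add: psum_def)

lemma Aint_Suc: "Aint a (Suc k) = {psum a k..<psum a (Suc k)}"
  by (simp add: Aint_def psum_def atLeastLessThanSuc_atLeastAtMost)

lemma Bint_Suc: "Bint m a b (Suc k) = {\<alpha> + psum b k..<\<alpha> + psum b (Suc k)}"
  by (simp add: Bint_def psum_def atLeastLessThanSuc_atLeastAtMost)

lemma A_piece_exists:
  assumes "0 \<le> x" "x < \<alpha>"
  obtains k where "k < m" "psum a k \<le> x" "x < psum a (Suc k)"
  by (rule interval_index_exists[of "psum a" x m]) (use assms that in simp_all)

lemma B_piece_exists:
  assumes "\<alpha> \<le> x" "x < 1"
  obtains k where "k < m" "\<alpha> + psum b k \<le> x" "x < \<alpha> + psum b (Suc k)"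
  by (rule interval_index_exists[of "\<lambda>k. \<alpha> + psum b k" x m])
    (use assms that alpha_add_psum_b in simp_all)

lemma B_pieces_strict: "strict_mono_on {..m} (\<lambda>k. \<alpha> + psum b k)"
  using psum_b_strict by (simp add: strict_mono_on_def)

lemma Bset_eq: "Bset m a b = {\<alpha>..<1}"
proof (intro equalityI subsetI)
  fix x assume "x \<in> Bset m a b"
  then obtain i where i: "i \<in> {1..m}" "x \<in> Bint m a b i"
    unfolding Bset_def by blast
  then obtain k where "i = Suc k" by (cases i) auto
  with i have "k < m" "x \<in> Bint m a b (Suc k)" by simp_all
  then show "x \<in> {\<alpha>..<1}"
    using psum_b_bounds[of k] psum_b_bounds[of "Suc k"] alpha_add_psum_b by (simp add: Bint_Suc)
next
  fix x assume "x \<in> {\<alpha>..<1}"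
  then have "\<alpha> \<le> x" "x < 1" by simp_all
  then obtain k where "k < m" "\<alpha> + psum b k \<le> x" "x < \<alpha> + psum b (Suc k)"
    by (rule B_piece_exists)
  then show "x \<in> Bset m a b"
    unfolding Bset_def by (intro UN_I[of "Suc k"]) (simp_all add: Bint_Suc)
qed

lemma T_on_A_piece:
  assumes "k < m" "psum a k \<le> x" "x < psum a (Suc k)"
  shows "T x = x + psum b (Suc k)"
proof -
  have "x < \<alpha>" using assms psum_a_bounds[of "Suc k"] by simp
  have "(if x \<in> Aint a (Suc j) then \<Sum>i=1..Suc j. b i else 0)
      - (if x \<in> Bint m a b (Suc j) then \<Sum>i=Suc j..m. a i else 0)
      = (if j = k then psum b (Suc k) else 0)" if "j < m" for j
  proof -
    have "x \<in> Aint a (Suc j) \<longleftrightarrow> j = k"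
      using interval_index_unique[OF psum_a_strict, of j k x] that assms by (auto simp: Aint_Suc)
    moreover have "x \<notin> Bint m a b (Suc j)"
      using \<open>x < \<alpha>\<close> psum_b_bounds[of j] that by (simp add: Bint_Suc)
    ultimately show ?thesis by (simp add: psum_def)
  qed
  then have "(\<Sum>j<m. (if x \<in> Aint a (Suc j) then \<Sum>i=1..Suc j. b i else 0)
      - (if x \<in> Bint m a b (Suc j) then \<Sum>i=Suc j..m. a i else 0))
      = (\<Sum>j<m. if j = k then psum b (Suc k) else 0)"
    by (intro sum.cong) auto
  then show ?thesis
    using assms(1) unfolding deck_shuffler_def sum_bounds_lt_plus1[symmetric] by simp
qed

lemma T_on_B_piece:
  assumes "k < m" "\<alpha> + psum b k \<le> x" "x < \<alpha> + psum b (Suc k)"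
  shows "T x = x - \<alpha> + psum a k"
proof -
  have "\<alpha> \<le> x" using assms psum_b_bounds[of k] by simp
  have "(if x \<in> Aint a (Suc j) then \<Sum>i=1..Suc j. b i else 0)
      - (if x \<in> Bint m a b (Suc j) then \<Sum>i=Suc j..m. a i else 0)
      = (if j = k then psum a k - \<alpha> else 0)" if "j < m" for j
  proof -
    have "x \<in> Bint m a b (Suc j) \<longleftrightarrow> j = k"
      using interval_index_unique[OF B_pieces_strict, of j k x] that assms by (auto simp: Bint_Suc)
    moreover have "x \<notin> Aint a (Suc j)"
      using \<open>\<alpha> \<le> x\<close> psum_a_bounds[of "Suc j"] that by (simp add: Aint_Suc)
    ultimately show ?thesis using psum_diff[of k m a] assms(1) by simp
  qed
  then have "(\<Sum>j<m. (if x \<in> Aint a (Suc j) then \<Sum>i=1..Suc j. b i else 0)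
      - (if x \<in> Bint m a b (Suc j) then \<Sum>i=Suc j..m. a i else 0))
      = (\<Sum>j<m. if j = k then psum a k - \<alpha> else 0)"
    by (intro sum.cong) auto
  then show ?thesis
    using assms(1) unfolding deck_shuffler_def sum_bounds_lt_plus1[symmetric] by simp
qed

definition image_cut :: "nat \<Rightarrow> real" where
  "image_cut j = psum a (j div 2) + psum b ((j + 1) div 2)"

lemma image_cut_even [simp]: "image_cut (2 * k) = psum a k + psum b k"
  by (simp add: image_cut_def)

lemma image_cut_odd [simp]: "image_cut (Suc (2 * k)) = psum a k + psum b (Suc k)"
  by (simp add: image_cut_def)

lemma image_cut_0: "image_cut 0 = 0"
  using image_cut_even[of 0] by simp

lemma image_cut_2m: "image_cut (2 * m) = 1"
  using alpha_add_psum_b by simp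

lemma image_cut_Suc: "image_cut (Suc j) = image_cut j + (if even j then b (Suc (j div 2)) else a (Suc (j div 2)))"
  by (cases "even j") (auto simp: image_cut_def elim!: oddE)

lemma image_cut_strict: "strict_mono_on {..2 * m} image_cut"
proof (rule strict_mono_on_atMostI)
  fix j assume "j < 2 * m"
  then have "Suc (j div 2) \<in> {1..m}" by simp
  then show "image_cut j < image_cut (Suc j)" using lengths_pos by (simp add: image_cut_Suc)
qed

lemma image_cut_bounds: "j \<le> 2 * m \<Longrightarrow> 0 \<le> image_cut j \<and> image_cut j \<le> 1"
  using strict_mono_on_leD[OF image_cut_strict, of 0 j] strict_mono_on_leD[OF image_cut_strict, of j "2 * m"]
  by (simp add: image_cut_0 alpha_add_psum_b)

lemma T_in_image_cut_interval:
  assumes "0 \<le> x" "x < 1"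
  obtains j where "j < 2 * m" "image_cut j \<le> T x" "T x < image_cut (Suc j)" "even j \<longleftrightarrow> \<alpha> \<le> x"
proof (cases "x < \<alpha>")
  case True
  with assms(1) obtain k where k: "k < m" "psum a k \<le> x" "x < psum a (Suc k)"
    by (rule A_piece_exists)
  have "image_cut (Suc (Suc (2 * k))) = psum a (Suc k) + psum b (Suc k)"
    using image_cut_even[of "Suc k"] by simp
  then show ?thesis using that[of "Suc (2 * k)"] T_on_A_piece[OF k] k True by simp
next
  case False
  then have "\<alpha> \<le> x" by simp
  from this assms(2) obtain k where k: "k < m" "\<alpha> + psum b k \<le> x" "x < \<alpha> + psum b (Suc k)"
    by (rule B_piece_exists)
  then show ?thesis using that[of "2 * k"] T_on_B_piece[OF k] False by simp
qed

lemma T_in_unit: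
  assumes "x \<in> {0..<1}"
  shows "T x \<in> {0..<1}"
proof -
  from assms have "0 \<le> x" "x < 1" by simp_all
  then obtain j where "j < 2 * m" "image_cut j \<le> T x" "T x < image_cut (Suc j)"
    by (rule T_in_image_cut_interval)
  then show ?thesis using image_cut_bounds[of j] image_cut_bounds[of "Suc j"] by simp
qed

lemma T_funpow_in_unit: "x \<in> {0..<1} \<Longrightarrow> (T ^^ n) x \<in> {0..<1}"
proof (induction n)
  case (Suc n)
  then show ?case using T_in_unit[of "(T ^^ n) x"] by simp
qed simp

definition same_piece :: "real \<Rightarrow> real \<Rightarrow> bool" where
  "same_piece x y \<longleftrightarrow>
     (\<exists>k<m. {x, y} \<subseteq> {psum a k..<psum a (Suc k)}) \<or>
     (\<exists>k<m. {x, y} \<subseteq> {\<alpha> + psum b k..<\<alpha> + psum b (Suc k)})"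

lemma same_piece_T_diff: "same_piece x y \<Longrightarrow> T y - T x = y - x"
  unfolding same_piece_def by (auto simp: T_on_A_piece T_on_B_piece)

lemma same_piece_between: "same_piece x y \<Longrightarrow> x \<le> z \<Longrightarrow> z \<le> y \<Longrightarrow> same_piece x z"
  unfolding same_piece_def by auto

definition \<delta> :: real where
  "\<delta> = Min (a ` {1..m} \<union> b ` {1..m})"

lemma \<delta>_pos: "0 < \<delta>"
proof -
  have "\<delta> \<in> a ` {1..m} \<union> b ` {1..m}"
    unfolding \<delta>_def using m_pos by (intro Min_in) auto
  then show ?thesis using lengths_pos by auto
qed

lemma \<delta>_le: "i \<in> {1..m} \<Longrightarrow> \<delta> \<le> a i \<and> \<delta> \<le> b i"
  unfolding \<delta>_def by (auto intro: Min_le)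

lemma T_gap_between_pieces:
  assumes "0 \<le> x" "x < y" "y < 1" "\<alpha> \<le> x \<longleftrightarrow> \<alpha> \<le> y" "\<not> same_piece x y"
  shows "y - x + \<delta> \<le> T y - T x"
proof (cases "x < \<alpha>")
  case True
  with assms(4) have "0 \<le> y" "y < \<alpha>" using assms(1,2) by auto
  from assms(1) True obtain i where i: "i < m" "psum a i \<le> x" "x < psum a (Suc i)"
    by (rule A_piece_exists)
  from \<open>0 \<le> y\<close> \<open>y < \<alpha>\<close> obtain j where j: "j < m" "psum a j \<le> y" "y < psum a (Suc j)"
    by (rule A_piece_exists)
  have "i \<le> j" by (rule interval_index_mono[OF psum_a_strict i(1,2) less_imp_le[OF assms(2)] j(3)])
  moreover have "i \<noteq> j" using assms(5) i j unfolding same_piece_def by auto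
  ultimately have "psum b (Suc i) \<le> psum b j"
    using strict_mono_on_leD[OF psum_b_strict, of "Suc i" j] j(1) by simp
  then have "psum b (Suc i) + \<delta> \<le> psum b (Suc j)" using \<delta>_le[of "Suc j"] j(1) by simp
  then show ?thesis using T_on_A_piece[OF i] T_on_A_piece[OF j] by simp
next
  case False
  with assms(4) have "\<alpha> \<le> x" "\<alpha> \<le> y" "x < 1" "y < 1" using assms(2,3) by auto
  from \<open>\<alpha> \<le> x\<close> \<open>x < 1\<close> obtain i where i: "i < m" "\<alpha> + psum b i \<le> x" "x < \<alpha> + psum b (Suc i)"
    by (rule B_piece_exists)
  from \<open>\<alpha> \<le> y\<close> \<open>y < 1\<close> obtain j where j: "j < m" "\<alpha> + psum b j \<le> y" "y < \<alpha> + psum b (Suc j)"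
    by (rule B_piece_exists)
  have "i \<le> j" by (rule interval_index_mono[OF B_pieces_strict i(1,2) less_imp_le[OF assms(2)] j(3)])
  moreover have "i \<noteq> j" using assms(5) i j unfolding same_piece_def by auto
  ultimately have "psum a (Suc i) \<le> psum a j"
    using strict_mono_on_leD[OF psum_a_strict, of "Suc i" j] j(1) by simp
  then have "psum a i + \<delta> \<le> psum a j" using \<delta>_le[of "Suc i"] i(1) by simp
  then show ?thesis using T_on_B_piece[OF i] T_on_B_piece[OF j] by simp
qed

lemma T_diff_same_side:
  assumes "0 \<le> x" "x \<le> y" "y < 1" "\<alpha> \<le> x \<longleftrightarrow> \<alpha> \<le> y"
  shows "y - x \<le> T y - T x"
proof (cases "x = y \<or> same_piece x y")
  case True
  then show ?thesis using same_piece_T_diff[of x y] by auto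
next
  case False
  then show ?thesis using T_gap_between_pieces[of x y] assms \<delta>_pos by simp
qed

lemma T_inj_on: "inj_on T {0..<1}"
proof (rule inj_onI)
  fix x y :: real assume x: "x \<in> {0..<1}" and y: "y \<in> {0..<1}" and eq: "T x = T y"
  from x have "0 \<le> x" "x < 1" by simp_all
  then obtain j where j: "j < 2 * m" "image_cut j \<le> T x" "T x < image_cut (Suc j)" "even j \<longleftrightarrow> \<alpha> \<le> x"
    by (rule T_in_image_cut_interval)
  from y have "0 \<le> y" "y < 1" by simp_all
  then obtain l where l: "l < 2 * m" "image_cut l \<le> T y" "T y < image_cut (Suc l)" "even l \<longleftrightarrow> \<alpha> \<le> y"
    by (rule T_in_image_cut_interval)
  have "j = l" using interval_index_unique[OF image_cut_strict j(1) l(1) j(2,3)] l(2,3) eq by simp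
  with j(4) l(4) have same_side: "\<alpha> \<le> x \<longleftrightarrow> \<alpha> \<le> y" by simp
  show "x = y"
  proof (cases x y rule: linorder_cases)
    case less
    then show ?thesis using T_diff_same_side[of x y] x y same_side eq by simp
  next
    case greater
    then show ?thesis using T_diff_same_side[of y x] x y same_side eq by simp
  qed
qed

lemma T_funpow_inj_on: "inj_on (T ^^ n) {0..<1}"
proof (induction n)
  case (Suc n)
  have "T ` {0..<1} \<subseteq> {0..<1}" using T_in_unit by blast
  then have "inj_on (T ^^ n) (T ` {0..<1})" by (rule inj_on_subset[OF Suc.IH])
  then show ?case unfolding funpow_Suc_right by (rule comp_inj_on[OF T_inj_on])
qed simp

lemma T_step_on_A:
  assumes "0 \<le> y" "y < \<alpha>"
  shows "y + \<delta> \<le> T y"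
proof -
  from assms obtain k where k: "k < m" "psum a k \<le> y" "y < psum a (Suc k)"
    by (rule A_piece_exists)
  have "\<delta> \<le> psum b (Suc k)" using \<delta>_le[of "Suc k"] psum_b_bounds[of k] k(1) by simp
  then show ?thesis using T_on_A_piece[OF k] by simp
qed

lemma T_step_on_B:
  assumes "\<alpha> \<le> y" "y < 1"
  shows "T y + \<delta> \<le> y"
proof -
  from assms obtain k where k: "k < m" "\<alpha> + psum b k \<le> y" "y < \<alpha> + psum b (Suc k)"
    by (rule B_piece_exists)
  have "psum a k + \<delta> \<le> \<alpha>" using \<delta>_le[of "Suc k"] psum_a_bounds[of "Suc k"] k(1) by simp
  then show ?thesis using T_on_B_piece[OF k] by simp
qed

lemma orbit_enters_B:
  assumes "x \<in> {0..<1}"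
  shows "\<exists>n. \<alpha> \<le> (T ^^ n) x"
proof (rule ccontr)
  assume "\<not> ?thesis"
  then have step: "(T ^^ n) x + \<delta> \<le> (T ^^ Suc n) x" for n
    using T_step_on_A[of "(T ^^ n) x"] T_funpow_in_unit[OF assms, of n] by (simp add: not_le)
  then have "incseq (\<lambda>n. (T ^^ n) x)" using \<delta>_pos by (intro incseq_SucI) (smt (verit))
  moreover have "(T ^^ n) x \<le> 1" for n using T_funpow_in_unit[OF assms, of n] by simp
  ultimately obtain N where "\<And>n. N \<le> n \<Longrightarrow> (T ^^ Suc n) x < (T ^^ n) x + \<delta>"
    using bounded_incseq_eventually_small_steps[OF _ _ \<delta>_pos] by blast
  then show False using step[of N] by fastforce
qed

lemma orbit_enters_A:
  assumes "x \<in> {0..<1}"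
  shows "\<exists>n. (T ^^ n) x < \<alpha>"
proof (rule ccontr)
  assume "\<not> ?thesis"
  then have step: "- (T ^^ n) x + \<delta> \<le> - (T ^^ Suc n) x" for n
    using T_step_on_B[of "(T ^^ n) x"] T_funpow_in_unit[OF assms, of n] by (simp add: not_less)
  then have "incseq (\<lambda>n. - (T ^^ n) x)" using \<delta>_pos by (intro incseq_SucI) (smt (verit))
  moreover have "- (T ^^ n) x \<le> 0" for n using T_funpow_in_unit[OF assms, of n] by simp
  ultimately obtain N where "\<And>n. N \<le> n \<Longrightarrow> - (T ^^ Suc n) x < - (T ^^ n) x + \<delta>"
    using bounded_incseq_eventually_small_steps[OF _ _ \<delta>_pos] by blast
  then show False using step[of N] by fastforce
qed

definition digit :: "real \<Rightarrow> nat \<Rightarrow> real" where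
  "digit x n = indicator {\<alpha>..<1} ((T ^^ n) x)"

lemma digit_bounds: "0 \<le> digit x n" "digit x n \<le> 1"
  by (simp_all add: digit_def indicator_def)

lemma digit_Suc: "digit x (Suc n) = digit (T x) n"
  by (simp add: digit_def funpow_swap1)

lemma H_binary_series: "H x = (\<Sum>n. digit x n / 2 ^ Suc n)"
  by (simp add: H_map_def Bset_eq digit_def)

lemma H_functional_eq: "H x = digit x 0 / 2 + H (T x) / 2"
  using binary_series_Suc[of "digit x"] by (simp add: H_binary_series digit_Suc digit_bounds)

lemma H_on_A: "0 \<le> x \<Longrightarrow> x < \<alpha> \<Longrightarrow> H x = H (T x) / 2"
  using H_functional_eq[of x] by (simp add: digit_def)

lemma H_on_B: "\<alpha> \<le> x \<Longrightarrow> x < 1 \<Longrightarrow> H x = 1 / 2 + H (T x) / 2"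
  using H_functional_eq[of x] by (simp add: digit_def)

lemma H_pos:
  assumes "x \<in> {0..<1}"
  shows "0 < H x"
proof -
  obtain n where "\<alpha> \<le> (T ^^ n) x" using orbit_enters_B[OF assms] by blast
  then have "0 < digit x n" using T_funpow_in_unit[OF assms, of n] by (simp add: digit_def)
  then show ?thesis
    unfolding H_binary_series by (intro binary_series_pos[of "digit x" n]) (simp_all add: digit_bounds)
qed

lemma H_less_one:
  assumes "x \<in> {0..<1}"
  shows "H x < 1"
proof -
  obtain n where "(T ^^ n) x < \<alpha>" using orbit_enters_A[OF assms] by blast
  then have "digit x n < 1" by (simp add: digit_def)
  then show ?thesis
    unfolding H_binary_series by (intro binary_series_less_one[of "digit x" n]) (simp_all add: digit_bounds)
qed

lemma H_on_A_less_half: "0 \<le> x \<Longrightarrow> x < \<alpha> \<Longrightarrow> H x < 1 / 2"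
  using H_on_A[of x] H_less_one[of "T x"] T_in_unit[of x] psum_b_bounds[of m] alpha_add_psum_b by simp

lemma H_on_B_greater_half: "\<alpha> \<le> x \<Longrightarrow> x < 1 \<Longrightarrow> 1 / 2 < H x"
  using H_on_B[of x] H_pos[of "T x"] T_in_unit[of x] psum_a_bounds[of m] by simp

lemma H_le_add_power:
  "0 \<le> x \<Longrightarrow> x < y \<Longrightarrow> y < 1 \<Longrightarrow> H x \<le> H y + (1 / 2) ^ n"
proof (induction n arbitrary: x y)
  case 0
  then show ?case using H_less_one[of x] H_pos[of y] by simp
next
  case (Suc n)
  show ?case
  proof (cases "\<alpha> \<le> x \<longleftrightarrow> \<alpha> \<le> y")
    case True
    have "0 \<le> T x" "T y < 1" using T_in_unit[of x] T_in_unit[of y] Suc.prems by simp_all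
    moreover have "T x < T y" using T_diff_same_side[of x y] True Suc.prems by simp
    ultimately have "H (T x) \<le> H (T y) + (1 / 2) ^ n" using Suc.IH by simp
    moreover have "H x - H y = (H (T x) - H (T y)) / 2"
      using H_functional_eq[of x] H_functional_eq[of y] True Suc.prems by (simp add: digit_def indicator_def)
    ultimately show ?thesis by simp
  next
    case False
    then have "x < \<alpha>" "\<alpha> \<le> y" using Suc.prems by auto
    then have "H x < 1 / 2" "1 / 2 < H y"
      using H_on_A_less_half[of x] H_on_B_greater_half[of y] Suc.prems by simp_all
    moreover have "0 \<le> (1 / 2 :: real) ^ Suc n" by simp
    ultimately show ?thesis by linarith
  qed
qed

lemma H_mono:
  assumes "0 \<le> x" "x \<le> y" "y < 1"
  shows "H x \<le> H y"
proof (cases "x = y")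
  case False
  show ?thesis
  proof (rule ccontr)
    assume "\<not> H x \<le> H y"
    then obtain n where "(1 / 2) ^ n < H x - H y"
      using real_arch_pow_inv[of "H x - H y" "1 / 2"] by auto
    moreover have "H x \<le> H y + (1 / 2) ^ n" using H_le_add_power False assms by simp
    ultimately show False by simp
  qed
qed simp

lemma H_eq_imp_same_side:
  assumes "x \<in> {0..<1}" "y \<in> {0..<1}" "H x = H y"
  shows "\<alpha> \<le> x \<longleftrightarrow> \<alpha> \<le> y"
proof -
  have "\<alpha> \<le> v" if "u \<in> {0..<1}" "v \<in> {0..<1}" "H u = H v" "\<alpha> \<le> u" for u v
  proof (rule ccontr)
    assume "\<not> \<alpha> \<le> v"
    then show False using H_on_B_greater_half[of u] H_on_A_less_half[of v] that by simp
  qed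
  then show ?thesis using assms by metis
qed

lemma H_eq_imp_same_itinerary:
  "x \<in> {0..<1} \<Longrightarrow> y \<in> {0..<1} \<Longrightarrow> H x = H y \<Longrightarrow> \<alpha> \<le> (T ^^ n) x \<longleftrightarrow> \<alpha> \<le> (T ^^ n) y"
proof (induction n arbitrary: x y)
  case 0
  then show ?case using H_eq_imp_same_side[of x y] by simp
next
  case (Suc n)
  have "\<alpha> \<le> x \<longleftrightarrow> \<alpha> \<le> y" using H_eq_imp_same_side[of x y] Suc.prems by simp
  then have "H (T x) = H (T y)"
    using H_functional_eq[of x] H_functional_eq[of y] Suc.prems by (simp add: digit_def indicator_def)
  then have "\<alpha> \<le> (T ^^ n) (T x) \<longleftrightarrow> \<alpha> \<le> (T ^^ n) (T y)"
    by (rule Suc.IH[OF T_in_unit[OF Suc.prems(1)] T_in_unit[OF Suc.prems(2)]])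
  then show ?case by (simp add: funpow_swap1)
qed

(* The distance between the two orbits never shrinks and grows by at least \<delta> whenever the two
   points lie in different pieces; being bounded, it is eventually constant. *)
lemma same_itinerary_eventually_rigid:
  assumes u: "u \<in> {0..<1}" and v: "v \<in> {0..<1}" and "u < v"
    and itinerary: "\<And>n. \<alpha> \<le> (T ^^ n) u \<longleftrightarrow> \<alpha> \<le> (T ^^ n) v"
  obtains N L where "0 < L"
    "\<And>n. N \<le> n \<Longrightarrow> (T ^^ n) v = (T ^^ n) u + L \<and> same_piece ((T ^^ n) u) ((T ^^ n) v)"
proof -
  define D where "D n = (T ^^ n) v - (T ^^ n) u" for n
  have orbit: "0 \<le> (T ^^ n) u" "(T ^^ n) u < 1" "0 \<le> (T ^^ n) v" "(T ^^ n) v < 1" for n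
    using T_funpow_in_unit[OF u, of n] T_funpow_in_unit[OF v, of n] by simp_all
  have expand: "(T ^^ n) u < (T ^^ n) v \<Longrightarrow> D n \<le> D (Suc n)" for n
    using T_diff_same_side[of "(T ^^ n) u" "(T ^^ n) v"] orbit itinerary by (simp add: D_def)
  have less: "(T ^^ n) u < (T ^^ n) v" for n
  proof (induction n)
    case (Suc n)
    then show ?case using expand[OF Suc] by (simp add: D_def)
  qed (simp add: \<open>u < v\<close>)
  have jump: "\<not> same_piece ((T ^^ n) u) ((T ^^ n) v) \<Longrightarrow> D n + \<delta> \<le> D (Suc n)" for n
    using T_gap_between_pieces[of "(T ^^ n) u" "(T ^^ n) v"] orbit itinerary less by (simp add: D_def)
  have "incseq D" using expand[OF less] by (rule incseq_SucI)
  moreover have "D n \<le> 1" for n using orbit[of n] by (simp add: D_def)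
  ultimately obtain N where small: "\<And>n. N \<le> n \<Longrightarrow> D (Suc n) < D n + \<delta>"
    using bounded_incseq_eventually_small_steps[OF _ _ \<delta>_pos] by blast
  have same: "same_piece ((T ^^ n) u) ((T ^^ n) v)" if "N \<le> n" for n
    using jump[of n] small[OF that] by linarith
  have D_const: "D n = D N" if "N \<le> n" for n
    using that
  proof (induction n rule: dec_induct)
    case (step n)
    then show ?case using same_piece_T_diff[OF same[OF step(1)]] by (simp add: D_def)
  qed simp
  have "0 < D N" using less[of N] by (simp add: D_def)
  moreover have "(T ^^ n) v = (T ^^ n) u + D N \<and> same_piece ((T ^^ n) u) ((T ^^ n) v)"
    if "N \<le> n" for n
    using D_const[OF that] same[OF that] by (simp add: D_def)
  ultimately show ?thesis by (rule that)
qed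

lemma rigid_orbit_translates:
  assumes rigid: "\<And>n. N \<le> n \<Longrightarrow> same_piece ((T ^^ n) u) ((T ^^ n) u + L)"
  shows "N \<le> n \<Longrightarrow> (T ^^ n) u \<le> z \<Longrightarrow> z \<le> (T ^^ n) u + L \<Longrightarrow>
    (T ^^ k) z = z + ((T ^^ (n + k)) u - (T ^^ n) u)"
proof (induction k arbitrary: n z)
  case (Suc k)
  have "same_piece ((T ^^ n) u) z"
    using same_piece_between[OF rigid[OF Suc.prems(1)] Suc.prems(2,3)] .
  then have "T z - T ((T ^^ n) u) = z - (T ^^ n) u" by (rule same_piece_T_diff)
  then have Tz: "T z = z + ((T ^^ Suc n) u - (T ^^ n) u)" by simp
  have "(T ^^ Suc k) z = (T ^^ k) (T z)" by (simp only: funpow_Suc_right comp_apply)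
  also have "\<dots> = T z + ((T ^^ (Suc n + k)) u - (T ^^ Suc n) u)"
    by (rule Suc.IH) (use Suc.prems Tz in simp_all)
  also have "\<dots> = z + ((T ^^ (n + Suc k)) u - (T ^^ n) u)" using Tz by (simp del: funpow.simps)
  finally show ?case .
qed simp

(* Two overlapping windows are translated by T ^^ e by the same amount. *)
lemma rigid_orbit_drift_repeats:
  assumes rigid: "\<And>n. N \<le> n \<Longrightarrow> same_piece ((T ^^ n) u) ((T ^^ n) u + L)"
    and "N \<le> q" "0 < L" "\<bar>(T ^^ (q + e)) u - (T ^^ q) u\<bar> < L"
  shows "(T ^^ (q + e + e)) u - (T ^^ (q + e)) u = (T ^^ (q + e)) u - (T ^^ q) u"
proof -
  define z where "z = max ((T ^^ q) u) ((T ^^ (q + e)) u)"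
  have z: "(T ^^ q) u \<le> z" "z \<le> (T ^^ q) u + L" "(T ^^ (q + e)) u \<le> z" "z \<le> (T ^^ (q + e)) u + L"
    using assms(3,4) by (auto simp: z_def abs_less_iff)
  have "(T ^^ e) z = z + ((T ^^ (q + e)) u - (T ^^ q) u)"
    using rigid_orbit_translates[OF rigid assms(2) z(1,2)] .
  moreover have "(T ^^ e) z = z + ((T ^^ (q + e + e)) u - (T ^^ (q + e)) u)"
    using rigid_orbit_translates[OF rigid _ z(3,4)] assms(2) by simp
  ultimately show ?thesis by simp
qed

lemma rigid_orbit_returns:
  assumes u: "u \<in> {0..<1}" and "0 < L"
    and rigid: "\<And>n. N \<le> n \<Longrightarrow> same_piece ((T ^^ n) u) ((T ^^ n) u + L)"
  obtains p e where "N \<le> p" "1 \<le> e" "(T ^^ (p + e)) u = (T ^^ p) u"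
proof -
  define X where "X n = (T ^^ n) u" for n
  have X_bound: "\<bar>X n\<bar> \<le> 1" for n
    using T_funpow_in_unit[OF u, of n] by (simp add: X_def)
  then have "bounded (range (\<lambda>j. X (N + j)))" by (intro boundedI[of _ 1]) auto
  then obtain i j where "i < j" "\<bar>X (N + j) - X (N + i)\<bar> < L"
    using \<open>0 < L\<close> by (rule bounded_sequence_close_terms)
  define p e where "p = N + i" and "e = j - i"
  define t where "t = X (p + e) - X p"
  have "1 \<le> e" "N \<le> p" "\<bar>t\<bar> < L"
    using \<open>i < j\<close> \<open>\<bar>X (N + j) - X (N + i)\<bar> < L\<close> by (simp_all add: p_def e_def t_def)
  have period: "X (p + r * e + e) - X (p + r * e) = t" for r
  proof (induction r)
    case (Suc r)
    have q: "N \<le> p + r * e" using \<open>N \<le> p\<close> by simp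
    have "\<bar>(T ^^ (p + r * e + e)) u - (T ^^ (p + r * e)) u\<bar> < L"
      using Suc \<open>\<bar>t\<bar> < L\<close> by (simp add: X_def)
    from rigid_orbit_drift_repeats[OF rigid q \<open>0 < L\<close> this] Suc
    have "X (p + r * e + e + e) - X (p + r * e + e) = t" by (simp add: X_def)
    moreover have "p + Suc r * e = p + r * e + e" by simp
    ultimately show ?case by (simp only:)
  qed (simp add: t_def)
  have "t = 0"
  proof (rule bounded_constant_increments_zero)
    show "X (p + Suc r * e) - X (p + r * e) = t" for r
      using period[of r] by (simp add: ac_simps)
  qed (rule X_bound)
  then have "X (p + e) = X p" by (simp add: t_def)
  then show ?thesis using that \<open>N \<le> p\<close> \<open>1 \<le> e\<close> by (simp add: X_def)
qed

lemma same_itinerary_periodic: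
  assumes u: "u \<in> {0..<1}" and v: "v \<in> {0..<1}" and "u < v"
    and itinerary: "\<And>n. \<alpha> \<le> (T ^^ n) u \<longleftrightarrow> \<alpha> \<le> (T ^^ n) v"
  obtains e where "1 \<le> e" "(T ^^ e) u = u" "(T ^^ e) v = v"
proof -
  obtain N L where "0 < L"
    and rigid: "\<And>n. N \<le> n \<Longrightarrow> (T ^^ n) v = (T ^^ n) u + L \<and> same_piece ((T ^^ n) u) ((T ^^ n) v)"
    using same_itinerary_eventually_rigid[OF u v \<open>u < v\<close> itinerary] by blast
  have "same_piece ((T ^^ n) u) ((T ^^ n) u + L)" if "N \<le> n" for n
    using rigid[OF that] by metis
  then obtain p e where "N \<le> p" "1 \<le> e" and return_u: "(T ^^ (p + e)) u = (T ^^ p) u"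
    using rigid_orbit_returns[OF u \<open>0 < L\<close>] by blast
  have return_v: "(T ^^ (p + e)) v = (T ^^ p) v"
    using rigid[of p] rigid[of "p + e"] return_u \<open>N \<le> p\<close> by simp
  have periodic: "(T ^^ e) w = w" if "w \<in> {0..<1}" "(T ^^ (p + e)) w = (T ^^ p) w" for w
    using inj_onD[OF T_funpow_inj_on[of p] _ T_funpow_in_unit[OF that(1)] that(1)] that(2)
    by (simp add: funpow_add)
  show ?thesis using that[OF \<open>1 \<le> e\<close> periodic[OF u return_u] periodic[OF v return_v]] .
qed

lemma image_cut_in_unit: "j < 2 * m \<Longrightarrow> image_cut j \<in> {0..<1}"
  using image_cut_bounds[of j] strict_mono_onD[OF image_cut_strict, of j "2 * m"] image_cut_2m by simp

lemma image_cut_preimage: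
  assumes "j < 2 * m"
  obtains s where "s \<in> {0..<1}" "T s = image_cut j" "\<alpha> \<le> s \<longleftrightarrow> even j"
proof (cases "even j")
  case True
  then obtain k where j: "j = 2 * k" by (rule evenE)
  with assms have k: "k < m" by simp
  then have "0 < b (Suc k)" using lengths_pos by simp
  moreover have "\<alpha> + psum b (Suc k) \<le> 1" using psum_b_bounds[of "Suc k"] k alpha_add_psum_b by simp
  ultimately have "\<alpha> + psum b k \<in> {0..<1}" "T (\<alpha> + psum b k) = image_cut j"
    using T_on_B_piece[OF k, of "\<alpha> + psum b k"] psum_a_bounds[of m] psum_b_bounds[of k] k j by simp_all
  with that[of "\<alpha> + psum b k"] True psum_b_bounds[of k] k show ?thesis by simp
next
  case False
  then obtain k where j: "j = Suc (2 * k)" by (auto elim!: oddE)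
  with assms have k: "k < m" by simp
  then have "0 < a (Suc k)" using lengths_pos by simp
  moreover have "psum a (Suc k) \<le> \<alpha>" using psum_a_bounds[of "Suc k"] k by simp
  ultimately have "psum a k \<in> {0..<1}" "psum a k < \<alpha>" "T (psum a k) = image_cut j"
    using T_on_A_piece[OF k, of "psum a k"] psum_a_bounds[of k] alpha_add_psum_b psum_b_bounds[of m] k j
    by simp_all
  with that[of "psum a k"] False show ?thesis by simp
qed

lemma periodic_point_preimage:
  assumes "x \<in> {0..<1}" "s \<in> {0..<1}" "1 \<le> e" "(T ^^ e) x = x" "T s = x"
  shows "(T ^^ (e - 1)) x = s"
proof -
  from assms(3) obtain e' where e: "e = Suc e'" by (cases e) auto
  have "T ((T ^^ e') x) = T s" using assms(4,5) e by simp
  then show ?thesis using inj_onD[OF T_inj_on _ T_funpow_in_unit[OF assms(1)] assms(2)] e by simp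
qed

(* image_cut j and image_cut (Suc j) have T-preimages on opposite sides of \<alpha>; equal values of H
   would make both points periodic with a common itinerary, so the preimages (their
   predecessors on the cycle) would lie on the same side. *)
lemma H_image_cut_strict:
  assumes "Suc j < 2 * m"
  shows "H (image_cut j) < H (image_cut (Suc j))"
proof -
  have u: "image_cut j \<in> {0..<1}" and v: "image_cut (Suc j) \<in> {0..<1}"
    using image_cut_in_unit assms by simp_all
  have less: "image_cut j < image_cut (Suc j)"
    using strict_mono_onD[OF image_cut_strict, of j "Suc j"] assms by simp
  have "H (image_cut j) \<noteq> H (image_cut (Suc j))"
  proof
    assume "H (image_cut j) = H (image_cut (Suc j))"
    then have itinerary: "\<And>n. \<alpha> \<le> (T ^^ n) (image_cut j) \<longleftrightarrow> \<alpha> \<le> (T ^^ n) (image_cut (Suc j))"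
      using H_eq_imp_same_itinerary[OF u v] by blast
    obtain e where e: "1 \<le> e" "(T ^^ e) (image_cut j) = image_cut j"
        "(T ^^ e) (image_cut (Suc j)) = image_cut (Suc j)"
      by (rule same_itinerary_periodic[OF u v less itinerary])
    from assms have "j < 2 * m" by simp
    then obtain s where s: "s \<in> {0..<1}" "T s = image_cut j" "\<alpha> \<le> s \<longleftrightarrow> even j"
      by (rule image_cut_preimage)
    from assms obtain s' where s': "s' \<in> {0..<1}" "T s' = image_cut (Suc j)" "\<alpha> \<le> s' \<longleftrightarrow> even (Suc j)"
      by (rule image_cut_preimage)
    have "\<alpha> \<le> s \<longleftrightarrow> \<alpha> \<le> s'"
      using itinerary[of "e - 1"] periodic_point_preimage[OF u s(1) e(1,2) s(2)]
        periodic_point_preimage[OF v s'(1) e(1,3) s'(2)] by simp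
    then show False using s(3) s'(3) by simp
  qed
  moreover have "H (image_cut j) \<le> H (image_cut (Suc j))"
    using H_mono[of "image_cut j" "image_cut (Suc j)"] u v less by simp
  ultimately show ?thesis by simp
qed

(* The ends are pinned to 0 and 1 (not H 0 and H (image_cut (2 * m))), so that the sectors
   [flower_cut k, flower_cut (Suc k)), k < 2 * m, tile [0,1). *)
definition flower_cut :: "nat \<Rightarrow> real" where
  "flower_cut k = (if k = 0 then 0 else if k < 2 * m then H (image_cut k) else 1)"

lemma flower_cut_strict: "strict_mono_on {..2 * m} flower_cut"
proof (rule strict_mono_on_atMostI)
  fix k assume k: "k < 2 * m"
  have pos: "0 < H (image_cut k)" and less_one: "H (image_cut k) < 1"
    using H_pos[OF image_cut_in_unit[OF k]] H_less_one[OF image_cut_in_unit[OF k]] by simp_all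
  consider "Suc k = 2 * m" | "k = 0" "Suc k < 2 * m" | "0 < k" "Suc k < 2 * m"
    using k by linarith
  then show "flower_cut k < flower_cut (Suc k)"
  proof cases
    case 1
    then show ?thesis using less_one by (simp add: flower_cut_def)
  next
    case 2
    then show ?thesis using H_pos[OF image_cut_in_unit[of 1]] m_pos by (simp add: flower_cut_def)
  next
    case 3
    then show ?thesis using H_image_cut_strict[of k] by (simp add: flower_cut_def)
  qed
qed

lemma flower_cut_0: "flower_cut 0 = 0"
  by (simp add: flower_cut_def)

lemma flower_cut_2m: "flower_cut (2 * m) = 1"
  using m_pos by (simp add: flower_cut_def)

lemma flower_cut_bounds: "k \<le> 2 * m \<Longrightarrow> 0 \<le> flower_cut k \<and> flower_cut k \<le> 1"
  using strict_mono_on_leD[OF flower_cut_strict, of 0 k] strict_mono_on_leD[OF flower_cut_strict, of k "2 * m"]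
  by (simp add: flower_cut_0 flower_cut_2m)

lemma H_between_flower_cuts:
  assumes "j < 2 * m" "image_cut j \<le> y" "y < image_cut (Suc j)"
  shows "flower_cut j \<le> H y \<and> H y \<le> flower_cut (Suc j)"
proof -
  have "image_cut (Suc j) \<le> 1" using image_cut_bounds[of "Suc j"] assms(1) by simp
  then have y: "y \<in> {0..<1}" using image_cut_bounds[of j] assms by simp
  have "flower_cut j \<le> H y"
  proof (cases "j = 0")
    case True
    then show ?thesis using H_pos[OF y] by (simp add: flower_cut_def)
  next
    case False
    then show ?thesis using H_mono[of "image_cut j" y] image_cut_bounds[of j] assms y
      by (simp add: flower_cut_def)
  qed
  moreover have "H y \<le> flower_cut (Suc j)"
  proof (cases "Suc j = 2 * m")
    case True
    then show ?thesis using H_less_one[OF y] by (simp add: flower_cut_def)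
  next
    case False
    then show ?thesis using H_mono[of y "image_cut (Suc j)"] image_cut_in_unit[of "Suc j"] assms y
      by (simp add: flower_cut_def)
  qed
  ultimately show ?thesis ..
qed

definition sector :: "real \<Rightarrow> nat" where
  "sector y = card {k \<in> {1..<2 * m}. flower_cut k \<le> y}"

definition \<eta> :: "real \<Rightarrow> real" where
  "\<eta> y = y / 2 + (if even (sector y) then 1 / 2 else 0)"

lemma sector_eq:
  assumes "k < 2 * m" "flower_cut k \<le> y" "y < flower_cut (Suc k)"
  shows "sector y = k"
proof -
  have "{j \<in> {1..<2 * m}. flower_cut j \<le> y} = {1..k}"
  proof (intro equalityI subsetI)
    fix j assume j: "j \<in> {j \<in> {1..<2 * m}. flower_cut j \<le> y}"
    then have "\<not> Suc k \<le> j"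
      using strict_mono_on_leD[OF flower_cut_strict, of "Suc k" j] assms(3) by auto
    with j show "j \<in> {1..k}" by simp
  next
    fix j assume "j \<in> {1..k}"
    then show "j \<in> {j \<in> {1..<2 * m}. flower_cut j \<le> y}"
      using strict_mono_on_leD[OF flower_cut_strict, of j k] assms by auto
  qed
  then show ?thesis by (simp add: sector_def)
qed

lemma \<eta>_selector: "y \<in> {0..<1} \<Longrightarrow> frac (2 * \<eta> y) = y"
  using frac_1_eq[of y] by (simp add: \<eta>_def frac_eq)

lemma circle_lift_\<eta>_on_sector:
  assumes "k < 2 * m" "flower_cut k \<le> t" "t < flower_cut (Suc k)"
  shows "circle_lift \<eta> t = branch k t"
proof -
  have "t \<in> {0..<1}"
    using flower_cut_bounds[of k] flower_cut_bounds[of "Suc k"] assms by simp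
  then show ?thesis
    using sector_eq[OF assms] by (simp add: circle_lift_def \<eta>_def branch_def frac_eq)
qed

lemma circle_lift_\<eta>_near_0:
  assumes "flower_cut (2 * m - 1) - 1 < t" "t < flower_cut 1"
  shows "circle_lift \<eta> t = branch 0 t"
proof (cases "t < 0")
  case True
  have last: "2 * m - 1 < 2 * m" "Suc (2 * m - 1) = 2 * m" "odd (2 * m - 1)" using m_pos by auto
  have "flower_cut (2 * m - 1) \<le> t + 1" "t + 1 < flower_cut (Suc (2 * m - 1))"
    using assms(1) True last(2) flower_cut_2m by simp_all
  then have "circle_lift \<eta> (t + 1) = branch (2 * m - 1) (t + 1)"
    by (rule circle_lift_\<eta>_on_sector[OF last(1)])
  moreover have "circle_lift \<eta> (t + 1) = circle_lift \<eta> t"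
    by (simp add: circle_lift_def frac_1_eq)
  moreover have "branch (2 * m - 1) (t + 1) = branch 0 t"
    using last(3) by (simp add: branch_def add_divide_distrib)
  ultimately show ?thesis by simp
next
  case False
  then show ?thesis using circle_lift_\<eta>_on_sector[of 0 t] assms m_pos by (simp add: flower_cut_0)
qed

lemma isCont_circle_lift_\<eta>:
  assumes "x \<in> {0..<1}" "x \<notin> flower_cut ` {1..<2 * m}"
  shows "isCont (circle_lift \<eta>) x"
proof (cases "x = 0")
  case True
  let ?S = "{flower_cut (2 * m - 1) - 1<..<flower_cut 1}"
  have "flower_cut (2 * m - 1) < 1" "0 < flower_cut 1"
    using strict_mono_onD[OF flower_cut_strict, of "2 * m - 1" "2 * m"]
      strict_mono_onD[OF flower_cut_strict, of 0 1] m_pos by (simp_all add: flower_cut_0 flower_cut_2m)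
  then have "x \<in> ?S" using True by simp
  then show ?thesis
  proof (rule isCont_if_eq_on_open[where S = ?S and g = "branch 0", rotated])
    show "circle_lift \<eta> t = branch 0 t" if "t \<in> ?S" for t
      using that by (simp add: circle_lift_\<eta>_near_0)
  qed (simp_all add: isCont_branch)
next
  case False
  have "flower_cut 0 \<le> x" "x < flower_cut (2 * m)" using assms(1) by (simp_all add: flower_cut_0 flower_cut_2m)
  then obtain k where k: "k < 2 * m" "flower_cut k \<le> x" "x < flower_cut (Suc k)"
    by (rule interval_index_exists)
  let ?S = "{flower_cut k<..<flower_cut (Suc k)}"
  have "flower_cut k \<noteq> x" using False assms(2) k(1) by (cases "k = 0") (auto simp: flower_cut_0)
  with k have "x \<in> ?S" by simp
  then show ?thesis
  proof (rule isCont_if_eq_on_open[where S = ?S and g = "branch k", rotated])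
    show "circle_lift \<eta> t = branch k t" if "t \<in> ?S" for t
      using that k(1) by (simp add: circle_lift_\<eta>_on_sector)
  qed (simp_all add: isCont_branch)
qed

lemma jump_at_flower_cut:
  assumes k: "k \<in> {1..<2 * m}"
  shows "jump_discont \<eta> (flower_cut k) \<and> \<not> isCont (circle_lift \<eta>) (flower_cut k)"
proof -
  define p where "p = flower_cut k"
  obtain i where i: "k = Suc i" using k by (cases k) auto
  have p_between: "flower_cut i < p" "p < flower_cut (Suc k)"
    using strict_mono_onD[OF flower_cut_strict, of i k] strict_mono_onD[OF flower_cut_strict, of k "Suc k"]
      k i by (simp_all add: p_def)
  have "eventually (\<lambda>t. circle_lift \<eta> t = branch i t) (at_left p)"
    using eventually_at_left_real[OF p_between(1)]
    by eventually_elim (use k i in \<open>simp add: p_def circle_lift_\<eta>_on_sector\<close>)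
  moreover have "(branch i \<longlongrightarrow> branch i p) (at_left p)"
    using isCont_branch[where k = i and t = p] unfolding isCont_def filterlim_at_split by blast
  ultimately have left: "(circle_lift \<eta> \<longlongrightarrow> branch i p) (at_left p)"
    by (rule tendsto_cong[THEN iffD2])
  have "eventually (\<lambda>t. circle_lift \<eta> t = branch k t) (at_right p)"
    using eventually_at_right_real[OF p_between(2)]
    by eventually_elim (use k in \<open>simp add: p_def circle_lift_\<eta>_on_sector\<close>)
  moreover have "(branch k \<longlongrightarrow> branch k p) (at_right p)"
    using isCont_branch[where k = k and t = p] unfolding isCont_def filterlim_at_split by blast
  ultimately have right: "(circle_lift \<eta> \<longlongrightarrow> branch k p) (at_right p)"
    by (rule tendsto_cong[THEN iffD2])
  have lift_at_cut: "circle_lift \<eta> p = branch k p"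
    using circle_lift_\<eta>_on_sector[of k p] p_between k by (simp add: p_def)
  have differ: "branch i p \<noteq> branch k p" using branch_Suc_neq[of i p] i by simp
  have "\<not> isCont (circle_lift \<eta>) p"
    using not_isCont_if_left_limit_differs[OF left] differ lift_at_cut by simp
  moreover have "jump_discont \<eta> p"
    unfolding jump_discont_def using left right differ lift_at_cut[symmetric] by blast
  ultimately show ?thesis by (simp add: p_def)
qed

lemma discont_set_\<eta>: "discont_set \<eta> = flower_cut ` {1..<2 * m}"
proof (intro equalityI subsetI)
  fix x assume "x \<in> discont_set \<eta>"
  then show "x \<in> flower_cut ` {1..<2 * m}"
    using isCont_circle_lift_\<eta> unfolding discont_set_def by blast
next
  fix x assume "x \<in> flower_cut ` {1..<2 * m}"
  then obtain k where k: "k \<in> {1..<2 * m}" "x = flower_cut k" by blast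
  have "flower_cut k < flower_cut (2 * m)"
    using strict_mono_onD[OF flower_cut_strict, of k "2 * m"] k(1) by simp
  then have "x \<in> {0..<1}" using flower_cut_bounds[of k] k by (simp add: flower_cut_2m)
  then show "x \<in> discont_set \<eta>" using jump_at_flower_cut[OF k(1)] k(2) by (simp add: discont_set_def)
qed

lemma card_discont_set_\<eta>: "card (discont_set \<eta>) = 2 * m - 1"
proof -
  have "inj_on flower_cut {1..<2 * m}"
    using strict_mono_on_imp_inj_on[OF flower_cut_strict] by (rule inj_on_subset) auto
  then show ?thesis by (simp add: discont_set_\<eta> card_image)
qed

lemma \<eta>_preimage_selector: "preimage_selector \<eta>"
  unfolding preimage_selector_def
  using \<eta>_selector discont_set_\<eta> jump_at_flower_cut by auto

lemma H_in_flower: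
  assumes "x \<in> {0..<1}"
  shows "frac (H x) \<in> flower_of \<eta>"
proof -
  from assms have "0 \<le> x" "x < 1" by simp_all
  then obtain j where j: "j < 2 * m" "image_cut j \<le> T x" "T x < image_cut (Suc j)" "even j \<longleftrightarrow> \<alpha> \<le> x"
    by (rule T_in_image_cut_interval)
  define y where "y = H (T x)"
  have y: "y \<in> {flower_cut j..flower_cut (Suc j)}"
    using H_between_flower_cuts[OF j(1-3)] by (simp add: y_def)
  have "H x = y / 2 + (if even j then 1 / 2 else 0)"
    using H_on_A[of x] H_on_B[of x] \<open>0 \<le> x\<close> \<open>x < 1\<close> j(4) by (auto simp: y_def)
  then have "circ (H x) = branch j y" by (simp add: branch_def)
  have sector_image: "branch j ` {flower_cut j..<flower_cut (Suc j)} \<subseteq> circ ` \<eta> ` {0..<1}"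
  proof
    fix z assume "z \<in> branch j ` {flower_cut j..<flower_cut (Suc j)}"
    then obtain t where t: "flower_cut j \<le> t" "t < flower_cut (Suc j)" "z = branch j t" by auto
    then have "t \<in> {0..<1}" using flower_cut_bounds[of j] flower_cut_bounds[of "Suc j"] j(1) by simp
    moreover have "z = circ (\<eta> t)"
      using circle_lift_\<eta>_on_sector[OF j(1) t(1,2)] t(3) \<open>t \<in> {0..<1}\<close> by (simp add: circle_lift_def frac_eq)
    ultimately show "z \<in> circ ` \<eta> ` {0..<1}" by blast
  qed
  have "flower_cut j < flower_cut (Suc j)"
    using strict_mono_onD[OF flower_cut_strict, of j "Suc j"] j(1) by simp
  then have "branch j ` {flower_cut j..flower_cut (Suc j)} \<subseteq> closure (circ ` \<eta> ` {0..<1})"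
    using image_closure_subset[OF continuous_on_branch closed_closure
        subset_trans[OF sector_image closure_subset]] by simp
  then have "circ (H x) \<in> closure (circ ` \<eta> ` {0..<1})"
    using y \<open>circ (H x) = branch j y\<close> by blast
  moreover have "H x \<in> {0..<1}" using H_pos[OF assms] H_less_one[OF assms] by simp
  ultimately show ?thesis by (simp add: flower_of_def frac_eq)
qed

end

theorem theorem4:
  fixes m :: nat and a b :: "nat \<Rightarrow> real"
  assumes "m \<ge> 1"
    and "\<forall>i\<in>{1..m}. a i > 0 \<and> b i > 0"
    and "(\<Sum>i=1..m. a i) + (\<Sum>i=1..m. b i) = 1"
  shows "\<exists>F. is_flower (2 * m - 1) F \<and> (\<forall>x\<in>{0..<1}. frac (H_map m a b x) \<in> F)"
proof -
  interpret deck_shuffler_iet m a b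
    using assms by unfold_locales
  have "is_flower (2 * m - 1) (flower_of \<eta>)"
    unfolding is_flower_def using \<eta>_preimage_selector card_discont_set_\<eta> by blast
  then show ?thesis using H_in_flower by blast
qed

end
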